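(* Let $G$ be a finite group with $R(G) \neq 1$. Then $|\mathrm{Solv}(G)| = |\mathrm{Solv}(G/R(G))|$.
   Context: $R(G)$ denotes the solvable radical of $G$, the largest solvable normal subgroup of $G$. For a finite group $G$ and $x \in G$, the solvabilizer of $x$ in $G$ is $\mathrm{Sol}_G(x) = \{y \in G : \langle x, y \rangle \text{ is solvable}\}$. $\mathrm{Solv}(G) = \{\mathrm{Sol}_G(x) : x \in G\}$ is the set of distinct solvabilizers of elements of $G$. *)

theory Defs
  imports "HOL-Algebra.Algebra"
begin

definition solvable_radical :: "('a, 'b) monoid_scheme \<Rightarrow> 'a set" where
  "solvable_radical G = (THE N. N \<lhd> G \<and> solvable (G\<lparr>carrier := N\<rparr>) \<and>
      (\<forall>M. M \<lhd> G \<and> solvable (G\<lparr>carrier := M\<rparr>) \<longrightarrow> M \<subseteq> N))"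

definition solvabilizer :: "('a, 'b) monoid_scheme \<Rightarrow> 'a \<Rightarrow> 'a set" where
  "solvabilizer G x = {y \<in> carrier G. solvable (subgroup_generated G {x, y})}"

definition Solv :: "('a, 'b) monoid_scheme \<Rightarrow> 'a set set" where
  "Solv G = solvabilizer G ` carrier G"

end

theory Submission
  imports Defs
begin

text \<open>Let \<open>\<pi> : G \<rightarrow> G/R\<close> be the quotient map by the solvable radical \<open>R\<close>. Since \<open>R\<close> is solvable,
  a subgroup \<open>K\<close> is solvable iff \<open>\<pi>(K)\<close> is, and \<open>\<pi>\<langle>x, y\<rangle> = \<langle>\<pi> x, \<pi> y\<rangle>\<close>; hence the
  solvabilizer of \<open>x\<close> is the full preimage of the solvabilizer of \<open>\<pi> x\<close>. As \<open>\<pi>\<close> is surjective,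
  taking preimages is injective, so it maps \<open>Solv(G/R)\<close> bijectively onto \<open>Solv(G)\<close>. The radical
  exists in a finite group because the product of two solvable normal subgroups is again one.\<close>

lemma (in normal) group_hom_r_coset_Mod: "group_hom G (G Mod H) (\<lambda>a. H #> a)"
  using r_coset_hom_Mod factorgroup_is_group
  by (simp add: group_hom_def group_hom_axioms_def)

lemma (in normal) kernel_r_coset_Mod: "kernel G (G Mod H) (\<lambda>a. H #> a) = H"
  unfolding kernel_def
  using coset_join1[OF _ _ subgroup_axioms] coset_join2[OF _ subgroup_axioms] subset by auto

lemma (in group) subset_set_mult_left:
  assumes "H \<subseteq> carrier G" "subgroup K G"
  shows "H \<subseteq> H <#> K"
proof
  fix h assume "h \<in> H"
  then have "h = h \<otimes> \<one>" using assms(1) by auto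
  then show "h \<in> H <#> K"
    using \<open>h \<in> H\<close> subgroup.one_closed[OF assms(2)] unfolding set_mult_def by blast
qed

lemma (in group) subset_set_mult_right:
  assumes "subgroup H G" "K \<subseteq> carrier G"
  shows "K \<subseteq> H <#> K"
proof
  fix k assume "k \<in> K"
  then have "k = \<one> \<otimes> k" using assms(2) by auto
  then show "k \<in> H <#> K"
    using \<open>k \<in> K\<close> subgroup.one_closed[OF assms(1)] unfolding set_mult_def by blast
qed

lemma (in group) solvable_subgroup_iff_solvable_seq:
  assumes "subgroup H G"
  shows "solvable (G\<lparr>carrier := H\<rparr>) \<longleftrightarrow> solvable_seq G H"
proof -
  interpret H: group "G\<lparr>carrier := H\<rparr>"
    using subgroup_imp_group[OF assms] .
  have "(derived (G\<lparr>carrier := H\<rparr>) ^^ n) H = (derived G ^^ n) H \<and> (derived G ^^ n) H \<subseteq> H" for n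
  proof (induction n)
    case 0
    then show ?case by simp
  next
    case (Suc n)
    then show ?case
      using derived_consistent[OF _ assms] derived_incl[OF _ assms] by simp
  qed
  then show ?thesis
    using H.solvable_iff_trivial_derived_seq solvable_imp_trivial_derived_seq
      trivial_derived_seq_imp_solvable[OF assms]
    by auto
qed

lemma (in group) solvable_subgroup_generated_iff:
  assumes "S \<subseteq> carrier G"
  shows "solvable (subgroup_generated G S) \<longleftrightarrow> solvable_seq G (generate G S)"
  using solvable_subgroup_iff_solvable_seq[OF generate_is_subgroup[OF assms]] assms
  by (simp add: subgroup_generated_def Int_absorb1)

lemma (in group_hom) solvable_seq_of_solvable_img:
  assumes K: "subgroup K G" and ker: "solvable_seq G (kernel G H h)"
    and img: "solvable_seq H (h ` K)"
  shows "solvable_seq G K"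
proof -
  obtain n where "(derived H ^^ n) (h ` K) = {\<one>\<^bsub>H\<^esub>}"
    using H.solvable_imp_trivial_derived_seq[OF img] by blast
  then have "h ` (derived G ^^ n) K = {\<one>\<^bsub>H\<^esub>}"
    using exp_of_derived_img[OF subgroup.subset[OF K]] by simp
  then have in_ker: "(derived G ^^ n) K \<subseteq> kernel G H h"
    using G.exp_of_derived_in_carrier[OF subgroup.subset[OF K]] by (auto simp: kernel_def)
  obtain m where m: "(derived G ^^ m) (kernel G H h) = {\<one>\<^bsub>G\<^esub>}"
    using G.solvable_imp_trivial_derived_seq[OF ker] by blast
  have "(derived G ^^ (m + n)) K = (derived G ^^ m) ((derived G ^^ n) K)"
    by (simp add: funpow_add)
  also have "\<dots> \<subseteq> {\<one>\<^bsub>G\<^esub>}"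
    using G.mono_exp_of_derived[OF in_ker, of m] unfolding m .
  finally have "(derived G ^^ (m + n)) K = {\<one>\<^bsub>G\<^esub>}"
    using subgroup.one_closed[OF G.exp_of_derived_is_subgroup[OF K]] by blast
  then show ?thesis
    using G.trivial_derived_seq_imp_solvable[OF K] by blast
qed

lemma (in group_hom) solvable_seq_iff_solvable_img:
  assumes "subgroup K G" and "solvable_seq G (kernel G H h)"
  shows "solvable_seq G K \<longleftrightarrow> solvable_seq H (h ` K)"
  using solvable_seq_of_solvable_img[OF assms] solvable_imp_solvable_img by blast

lemma (in group) solvable_seq_normal_set_mult:
  assumes N: "N \<lhd> G" and M: "M \<lhd> G"
    and "solvable_seq G N" and "solvable_seq G M"
  shows "solvable_seq G (N <#> M)"
proof -
  interpret N: normal N G by fact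
  interpret M: normal M G by fact
  interpret \<pi>: group_hom G "G Mod N" "\<lambda>a. N #> a"
    using N.group_hom_r_coset_Mod .
  have "(\<lambda>a. N #> a) ` (N <#> M) = (\<lambda>a. N #> a) ` M"
  proof
    show "(\<lambda>a. N #> a) ` (N <#> M) \<subseteq> (\<lambda>a. N #> a) ` M"
    proof
      fix z assume "z \<in> (\<lambda>a. N #> a) ` (N <#> M)"
      then obtain a b where ab: "a \<in> N" "b \<in> M" and z: "z = N #> (a \<otimes> b)"
        unfolding set_mult_def by blast
      have "N #> (a \<otimes> b) = (N #> a) #> b"
        using ab by (metis coset_mult_assoc N.subset M.subset subsetD)
      moreover have "N #> a = N"
        using ab(1) coset_join2 N.subgroup_axioms N.subset by blast
      ultimately have "z = N #> b"
        using z by (simp only:)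
      then show "z \<in> (\<lambda>a. N #> a) ` M"
        using ab(2) by (rule image_eqI)
    qed
    show "(\<lambda>a. N #> a) ` M \<subseteq> (\<lambda>a. N #> a) ` (N <#> M)"
      using subset_set_mult_right[OF N.subgroup_axioms M.subset] by (rule image_mono)
  qed
  then have img: "solvable_seq (G Mod N) ((\<lambda>a. N #> a) ` (N <#> M))"
    using \<pi>.solvable_imp_solvable_img[OF \<open>solvable_seq G M\<close>] by (simp only:)
  have "subgroup (N <#> M) G"
    using normal_subgroup_set_mult_closed[OF N M] normal_imp_subgroup by blast
  then show ?thesis
    using \<pi>.solvable_seq_of_solvable_img img \<open>solvable_seq G N\<close>
    unfolding N.kernel_r_coset_Mod by blast
qed

lemma (in group) ex_greatest_solvable_normal:
  assumes "finite (carrier G)"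
  shows "\<exists>N. N \<lhd> G \<and> solvable_seq G N \<and> (\<forall>M. M \<lhd> G \<and> solvable_seq G M \<longrightarrow> M \<subseteq> N)"
proof -
  let ?\<N> = "{N. N \<lhd> G \<and> solvable_seq G N}"
  have "?\<N> \<subseteq> Pow (carrier G)"
    using normal_imp_subgroup subgroup.subset by blast
  then have "finite ?\<N>"
    using assms by (simp add: finite_subset)
  moreover have "{\<one>} \<in> ?\<N>"
    using one_is_normal solvable_seq.unity by blast
  ultimately obtain N where N: "N \<in> ?\<N>" and maximal: "\<And>M. M \<in> ?\<N> \<Longrightarrow> N \<subseteq> M \<Longrightarrow> N = M"
    using finite_has_maximal[of ?\<N>] by blast
  have "M \<subseteq> N" if M: "M \<in> ?\<N>" for M
  proof -
    have N_sub: "subgroup N G" and M_sub: "subgroup M G"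
      using N M normal_imp_subgroup by blast+
    have "N <#> M \<in> ?\<N>"
      using N M normal_subgroup_set_mult_closed solvable_seq_normal_set_mult by blast
    moreover have "N \<subseteq> N <#> M"
      using subset_set_mult_left[OF subgroup.subset[OF N_sub] M_sub] .
    ultimately have "N = N <#> M"
      by (rule maximal)
    then show ?thesis
      using subset_set_mult_right[OF N_sub subgroup.subset[OF M_sub]] by simp
  qed
  then show ?thesis
    using N by blast
qed

lemma (in group) solvable_radical_normal_solvable:
  assumes "finite (carrier G)"
  shows "solvable_radical G \<lhd> G" and "solvable_seq G (solvable_radical G)"
proof -
  have solvable_iff: "solvable (G\<lparr>carrier := M\<rparr>) \<longleftrightarrow> solvable_seq G M" if "M \<lhd> G" for M
    using solvable_subgroup_iff_solvable_seq normal_imp_subgroup that by blast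
  obtain N where N: "N \<lhd> G" "solvable_seq G N"
    and greatest: "\<And>M. M \<lhd> G \<Longrightarrow> solvable_seq G M \<Longrightarrow> M \<subseteq> N"
    using ex_greatest_solvable_normal[OF assms] by blast
  have "solvable_radical G = N"
    unfolding solvable_radical_def
  proof (rule the_equality)
    show "N \<lhd> G \<and> solvable (G\<lparr>carrier := N\<rparr>) \<and>
        (\<forall>M. M \<lhd> G \<and> solvable (G\<lparr>carrier := M\<rparr>) \<longrightarrow> M \<subseteq> N)"
      using N greatest solvable_iff by blast
  next
    fix N' assume "N' \<lhd> G \<and> solvable (G\<lparr>carrier := N'\<rparr>) \<and>
        (\<forall>M. M \<lhd> G \<and> solvable (G\<lparr>carrier := M\<rparr>) \<longrightarrow> M \<subseteq> N')"
    then show "N' = N"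
      using N greatest solvable_iff by (metis subset_antisym)
  qed
  then show "solvable_radical G \<lhd> G" and "solvable_seq G (solvable_radical G)"
    using N by simp_all
qed

lemma (in normal) solvabilizer_eq_vimage_Mod:
  assumes "solvable_seq G H" and x: "x \<in> carrier G"
  shows "solvabilizer G x = (\<lambda>a. H #> a) -` solvabilizer (G Mod H) (H #> x) \<inter> carrier G"
proof -
  interpret \<pi>: group_hom G "G Mod H" "\<lambda>a. H #> a"
    using group_hom_r_coset_Mod .
  have "solvable (subgroup_generated G {x, y}) \<longleftrightarrow>
        solvable (subgroup_generated (G Mod H) {H #> x, H #> y})" if y: "y \<in> carrier G" for y
  proof -
    have xy: "{x, y} \<subseteq> carrier G"
      using x y by simp
    have "solvable (subgroup_generated G {x, y}) \<longleftrightarrow> solvable_seq G (generate G {x, y})"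
      using solvable_subgroup_generated_iff[OF xy] .
    also have "\<dots> \<longleftrightarrow> solvable_seq (G Mod H) ((\<lambda>a. H #> a) ` generate G {x, y})"
      using \<pi>.solvable_seq_iff_solvable_img[OF generate_is_subgroup[OF xy]] assms(1)
      unfolding kernel_r_coset_Mod by blast
    also have "(\<lambda>a. H #> a) ` generate G {x, y} = generate (G Mod H) {H #> x, H #> y}"
      using \<pi>.generate_img[OF xy] by simp
    also have "solvable_seq (G Mod H) \<dots> \<longleftrightarrow> solvable (subgroup_generated (G Mod H) {H #> x, H #> y})"
      using \<pi>.H.solvable_subgroup_generated_iff[symmetric] x y \<pi>.hom_closed by simp
    finally show ?thesis .
  qed
  then show ?thesis
    unfolding solvabilizer_def using \<pi>.hom_closed by auto
qed

lemma card_vimage_image: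
  assumes "f ` A = B" and "\<S> \<subseteq> Pow B"
  shows "card ((\<lambda>S. f -` S \<inter> A) ` \<S>) = card \<S>"
proof (rule card_image, rule inj_onI)
  have image_vimage: "f ` (f -` S \<inter> A) = S" if "S \<in> \<S>" for S
    using that assms by blast
  fix S T assume "S \<in> \<S>" "T \<in> \<S>" "f -` S \<inter> A = f -` T \<inter> A"
  then show "S = T"
    using image_vimage by metis
qed

theorem lemma2p6:
  fixes G :: "('a, 'b) monoid_scheme"
  assumes "group G" and "finite (carrier G)"
    and "solvable_radical G \<noteq> {\<one>\<^bsub>G\<^esub>}"
  shows "card (Solv G) = card (Solv (G Mod solvable_radical G))"
proof -
  interpret group G by fact
  define R where "R = solvable_radical G"
  interpret R: normal R G
    using solvable_radical_normal_solvable(1)[OF assms(2)] unfolding R_def .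
  have "solvable_seq G R"
    using solvable_radical_normal_solvable(2)[OF assms(2)] unfolding R_def .
  define pullback where "pullback S = r_coset G R -` S \<inter> carrier G" for S
  have "Solv G = pullback ` solvabilizer (G Mod R) ` r_coset G R ` carrier G"
    unfolding Solv_def image_image pullback_def
    using R.solvabilizer_eq_vimage_Mod[OF \<open>solvable_seq G R\<close>] by (rule image_cong[OF refl])
  also have "\<dots> = pullback ` Solv (G Mod R)"
    unfolding Solv_def carrier_FactGroup ..
  finally have "card (Solv G) = card (pullback ` Solv (G Mod R))"
    by (rule arg_cong)
  also have "\<dots> = card (Solv (G Mod R))"
    unfolding pullback_def
  proof (rule card_vimage_image)
    show "Solv (G Mod R) \<subseteq> Pow (r_coset G R ` carrier G)"
      unfolding Solv_def solvabilizer_def carrier_FactGroup by blast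
  qed simp
  finally show ?thesis
    unfolding R_def .
qed

end
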